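(* Let $A>0$. For every $w\ge 0$ the initial value problem $$v'(t)=-v(t)^2\Big(\sqrt{A^2t^2+w}+v(t)\Big),\qquad v(0)=1,$$ has a unique solution $v(\cdot;w)\in C^1([0,\infty))$ defined on all of $[0,\infty)$, and it takes values in $(0,1]$. Moreover: (1) for fixed $w$, $t\mapsto v(t;w)$ is strictly decreasing on $[0,\infty)$; for fixed $t>0$, $w\mapsto v(t;w)$ is strictly decreasing on $[0,\infty)$; (2) for all $t>0$ and $w\ge0$, $$v(t;w)<\frac{2}{2+t\sqrt{A^2t^2+w}};$$ in particular $v(t;w)\to0$ as $t\to\infty$; (3) the map $w\mapsto v(\cdot;w)$ is continuous from $[0,\infty)$ into $L^\infty(0,\infty)$.
   Context: $A>0$ is a fixed constant (a dimensionless parameter of a model of a viscous jet falling under gravity onto a moving belt). *)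

theory Defs
  imports "HOL-Analysis.Analysis"
begin

definition ivp_sol :: "real \<Rightarrow> real \<Rightarrow> (real \<Rightarrow> real) \<Rightarrow> bool" where
  "ivp_sol A w v \<longleftrightarrow> v 0 = 1 \<and>
     (\<exists>v'. continuous_on {0..} v' \<and>
        (\<forall>t\<ge>0. (v has_real_derivative v' t) (at t within {0..}) \<and>
                 v' t = - (v t)\<^sup>2 * (sqrt (A\<^sup>2 * t\<^sup>2 + w) + v t)))"

end

theory Submission
  imports Defs "HOL-Real_Asymp.Real_Asymp"
begin

text \<open>With \<open>u = 1 / v\<close> the problem becomes \<open>u' = g(t) + 1 / u\<close>, \<open>u(0) = 1\<close>, where
  \<open>g(t) = sqrt (A\<^sup>2 t\<^sup>2 + w) \<ge> 0\<close>. Picard iteration, with the nonlinearity cut off below 1,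
  gives a global solution \<open>u \<ge> 1\<close>; it is increasing in \<open>t\<close>, so \<open>v\<close> takes values in \<open>(0, 1]\<close>
  and decreases. Differences of solutions satisfy linear equations \<open>d' = h - K d\<close>, whose sign
  is controlled by an integrating factor: for \<open>h = 0\<close> this is uniqueness, for \<open>h = g\<^sub>2 - g\<^sub>1\<close>
  strict monotonicity in \<open>w\<close>, and comparison with \<open>c t\<close> gives
  \<open>|u\<^sub>w - u\<^sub>w\<^sub>0| \<le> t sqrt |w - w\<^sub>0|\<close>. Since \<open>(t g(t))' \<le> 2 g(t)\<close>, the function
  \<open>u - t g(t) / 2\<close> increases strictly, which is the bound (2) and yields
  \<open>v \<le> 2 / (2 + A t\<^sup>2)\<close> uniformly in \<open>w\<close>. Continuity in \<open>L\<^sup>\<infinity>\<close> follows from the difference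
  estimate on \<open>[0, T]\<close> and this decay beyond \<open>T\<close>.\<close>

lemma at_within_atLeast_eq_atLeastAtMost:
  fixes a b x :: real
  assumes "a \<le> x" "x < b"
  shows "at x within {a..} = at x within {a..b}"
  by (rule at_within_nhd[of x "{..<b}"]) (use assms in auto)

lemma integral_has_real_derivative_atLeast:
  fixes f :: "real \<Rightarrow> real"
  assumes "continuous_on {a..} f" "a \<le> t"
  shows "((\<lambda>x. integral {a..x} f) has_real_derivative f t) (at t within {a..})"
proof -
  have "((\<lambda>x. integral {a..x} f) has_real_derivative f t) (at t within {a..t+1})"
    by (rule integral_has_real_derivative) (use assms in \<open>auto intro: continuous_on_subset\<close>)
  then show ?thesis
    using at_within_atLeast_eq_atLeastAtMost[of a t "t+1"] assms(2) by simp
qed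

lemma DERIV_atLeast_imp_continuous_on:
  fixes f :: "real \<Rightarrow> real"
  assumes "\<And>x. a \<le> x \<Longrightarrow> (f has_real_derivative f' x) (at x within {a..})"
  shows "continuous_on {a..} f"
  unfolding continuous_on_eq_continuous_within
  using assms by (auto intro: DERIV_continuous)

lemma DERIV_within_atLeast_imp_at:
  fixes f :: "real \<Rightarrow> real"
  assumes "a < x" "(f has_real_derivative D) (at x within {a..})"
  shows "(f has_real_derivative D) (at x)"
  using assms at_within_interior[of x "{a..}"] by simp

lemma DERIV_nonneg_imp_increasing_atLeast:
  fixes f :: "real \<Rightarrow> real"
  assumes deriv: "\<And>x. a \<le> x \<Longrightarrow> (f has_real_derivative f' x) (at x within {a..})"
    and "a \<le> s" "s \<le> t" and nonneg: "\<And>x. s < x \<Longrightarrow> x < t \<Longrightarrow> 0 \<le> f' x"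
  shows "f s \<le> f t"
proof (rule DERIV_nonneg_imp_increasing_open[OF \<open>s \<le> t\<close>])
  show "continuous_on {s..t} f"
    by (rule continuous_on_subset[OF DERIV_atLeast_imp_continuous_on[OF deriv]]) (use assms in auto)
next
  fix x assume "s < x" "x < t"
  then show "\<exists>y. (f has_real_derivative y) (at x) \<and> 0 \<le> y"
    using DERIV_within_atLeast_imp_at[OF _ deriv, of x] nonneg \<open>a \<le> s\<close> by auto
qed

lemma DERIV_pos_imp_increasing_atLeast:
  fixes f :: "real \<Rightarrow> real"
  assumes deriv: "\<And>x. a \<le> x \<Longrightarrow> (f has_real_derivative f' x) (at x within {a..})"
    and "a \<le> s" "s < t" and pos: "\<And>x. s < x \<Longrightarrow> x < t \<Longrightarrow> 0 < f' x"
  shows "f s < f t"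
proof (rule DERIV_pos_imp_increasing_open[OF \<open>s < t\<close>])
  show "continuous_on {s..t} f"
    by (rule continuous_on_subset[OF DERIV_atLeast_imp_continuous_on[OF deriv]]) (use assms in auto)
next
  fix x assume "s < x" "x < t"
  then show "\<exists>y. (f has_real_derivative y) (at x) \<and> 0 < y"
    using DERIV_within_atLeast_imp_at[OF _ deriv, of x] pos \<open>a \<le> s\<close> by auto
qed

lemma integrating_factor_DERIV:
  fixes d h K :: "real \<Rightarrow> real"
  assumes K: "continuous_on {a..} K"
    and d: "\<And>x. a \<le> x \<Longrightarrow> (d has_real_derivative h x - K x * d x) (at x within {a..})"
    and "a \<le> x"
  shows "((\<lambda>x. d x * exp (integral {a..x} K)) has_real_derivative h x * exp (integral {a..x} K))
           (at x within {a..})"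
proof -
  have "((\<lambda>x. d x * exp (integral {a..x} K)) has_real_derivative
      (h x - K x * d x) * exp (integral {a..x} K) + exp (integral {a..x} K) * K x * d x)
      (at x within {a..})"
    by (rule DERIV_mult[OF d[OF \<open>a \<le> x\<close>]
          DERIV_chain2[OF DERIV_exp integral_has_real_derivative_atLeast[OF K \<open>a \<le> x\<close>]]])
  then show ?thesis by (simp add: algebra_simps)
qed

lemma linear_ode_solution_nonneg:
  fixes d h K :: "real \<Rightarrow> real"
  assumes K: "continuous_on {a..} K"
    and d: "\<And>x. a \<le> x \<Longrightarrow> (d has_real_derivative h x - K x * d x) (at x within {a..})"
    and "d a = 0" "a \<le> t" and h: "\<And>x. a < x \<Longrightarrow> x < t \<Longrightarrow> 0 \<le> h x"
  shows "0 \<le> d t"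
proof -
  have "d a * exp (integral {a..a} K) \<le> d t * exp (integral {a..t} K)"
    by (rule DERIV_nonneg_imp_increasing_atLeast[where f'="\<lambda>x. h x * exp (integral {a..x} K)"])
       (use assms integrating_factor_DERIV[OF K d] in auto)
  then show ?thesis using \<open>d a = 0\<close> by (simp add: zero_le_mult_iff)
qed

lemma linear_ode_solution_pos:
  fixes d h K :: "real \<Rightarrow> real"
  assumes K: "continuous_on {a..} K"
    and d: "\<And>x. a \<le> x \<Longrightarrow> (d has_real_derivative h x - K x * d x) (at x within {a..})"
    and "d a = 0" "a < t" and h: "\<And>x. a < x \<Longrightarrow> x < t \<Longrightarrow> 0 < h x"
  shows "0 < d t"
proof -
  have "d a * exp (integral {a..a} K) < d t * exp (integral {a..t} K)"
    by (rule DERIV_pos_imp_increasing_atLeast[where f'="\<lambda>x. h x * exp (integral {a..x} K)"])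
       (use assms integrating_factor_DERIV[OF K d] in auto)
  then show ?thesis using \<open>d a = 0\<close> by (simp add: zero_less_mult_iff)
qed

lemma abs_le_power_fact_if_DERIV:
  fixes f f' :: "real \<Rightarrow> real"
  assumes f: "\<And>x. a \<le> x \<Longrightarrow> (f has_real_derivative f' x) (at x within {a..})"
    and "f a = 0" "a \<le> t"
    and bound: "\<And>x. a < x \<Longrightarrow> x < t \<Longrightarrow> \<bar>f' x\<bar> \<le> M * (x - a) ^ n / fact n"
  shows "\<bar>f t\<bar> \<le> M * (t - a) ^ Suc n / fact (Suc n)"
proof -
  define F where "F x = M * (x - a) ^ Suc n / fact (Suc n)" for x
  have F: "(F has_real_derivative M * (x - a) ^ n / fact n) (at x within {a..})" for x
  proof -
    have "(F has_real_derivative M * (real (Suc n) * (x - a) ^ n) / fact (Suc n))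
        (at x within {a..})"
      unfolding F_def by (auto intro!: derivative_eq_intros simp del: power_Suc)
    then show ?thesis by (simp add: field_simps del: of_nat_Suc)
  qed
  have "(\<lambda>x. F x - f x) a \<le> (\<lambda>x. F x - f x) t"
    by (rule DERIV_nonneg_imp_increasing_atLeast[OF DERIV_diff[OF F f]])
       (use assms in \<open>auto dest: bound\<close>)
  moreover have "(\<lambda>x. F x + f x) a \<le> (\<lambda>x. F x + f x) t"
    by (rule DERIV_nonneg_imp_increasing_atLeast[OF DERIV_add[OF F f]])
       (use assms in \<open>auto dest: bound\<close>)
  ultimately show ?thesis using \<open>f a = 0\<close> by (simp add: F_def)
qed

lemma abs_one_div_diff_le:
  fixes a b :: real
  assumes "1 \<le> a" "1 \<le> b"
  shows "\<bar>1 / a - 1 / b\<bar> \<le> \<bar>a - b\<bar>"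
proof -
  have "\<bar>1 / a - 1 / b\<bar> = \<bar>a - b\<bar> / (a * b)"
    using assms by (simp add: field_simps abs_div)
  also have "\<dots> \<le> \<bar>a - b\<bar> / 1"
    using mult_mono[OF assms] assms by (intro divide_left_mono) auto
  finally show ?thesis by simp
qed

text \<open>The cut-off \<open>max x 1\<close> makes the
  right-hand side globally 1-Lipschitz in \<open>x\<close>; it is inactive along the solution when
  \<open>g \<ge> 0\<close>, since the solution then stays above 1.\<close>
definition recip_rhs :: "(real \<Rightarrow> real) \<Rightarrow> real \<Rightarrow> real \<Rightarrow> real" where
  "recip_rhs g t x = g t + 1 / max x 1"

primrec picard :: "(real \<Rightarrow> real) \<Rightarrow> nat \<Rightarrow> real \<Rightarrow> real" where
  "picard g 0 = (\<lambda>t. 1)"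
| "picard g (Suc n) = (\<lambda>t. 1 + integral {0..t} (\<lambda>\<tau>. recip_rhs g \<tau> (picard g n \<tau>)))"

definition recip_sol :: "(real \<Rightarrow> real) \<Rightarrow> real \<Rightarrow> real" where
  "recip_sol g t = lim (\<lambda>n. picard g n t)"

lemma recip_rhs_lipschitz: "\<bar>recip_rhs g t x - recip_rhs g t y\<bar> \<le> \<bar>x - y\<bar>"
proof -
  have "\<bar>recip_rhs g t x - recip_rhs g t y\<bar> = \<bar>1 / max x 1 - 1 / max y 1\<bar>"
    by (simp add: recip_rhs_def)
  also have "\<dots> \<le> \<bar>max x 1 - max y 1\<bar>" by (rule abs_one_div_diff_le) auto
  also have "\<dots> \<le> \<bar>x - y\<bar>" by (auto simp: max_def)
  finally show ?thesis .
qed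

lemma continuous_on_recip_rhs:
  "continuous_on S g \<Longrightarrow> continuous_on S p \<Longrightarrow> continuous_on S (\<lambda>\<tau>. recip_rhs g \<tau> (p \<tau>))"
  unfolding recip_rhs_def by (intro continuous_intros) auto

lemma picard_at_0 [simp]: "picard g n 0 = 1"
  by (cases n) auto

lemma continuous_on_picard:
  assumes g: "continuous_on {0..} g"
  shows "continuous_on {0..} (picard g n)"
proof (induction n)
  case (Suc n)
  have "((\<lambda>t. 1 + integral {0..t} (\<lambda>\<tau>. recip_rhs g \<tau> (picard g n \<tau>)))
      has_real_derivative 0 + recip_rhs g t (picard g n t)) (at t within {0..})"
    if "0 \<le> t" for t
    by (intro DERIV_add DERIV_const integral_has_real_derivative_atLeast
        continuous_on_recip_rhs g Suc.IH that)
  then show ?case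
    unfolding picard.simps by (rule DERIV_atLeast_imp_continuous_on)
qed simp

lemma picard_DERIV:
  assumes g: "continuous_on {0..} g" and "0 \<le> t"
  shows "(picard g (Suc n) has_real_derivative recip_rhs g t (picard g n t)) (at t within {0..})"
  using DERIV_add[OF DERIV_const integral_has_real_derivative_atLeast[OF
        continuous_on_recip_rhs[OF g continuous_on_picard[OF g]] \<open>0 \<le> t\<close>]]
  by simp

lemma picard_step_bound:
  assumes g: "continuous_on {0..} g" and M: "\<And>\<tau>. 0 \<le> \<tau> \<Longrightarrow> \<tau> \<le> T \<Longrightarrow> \<bar>g \<tau>\<bar> + 1 \<le> M"
    and "0 \<le> t" "t \<le> T"
  shows "\<bar>picard g (Suc n) t - picard g n t\<bar> \<le> M * t ^ Suc n / fact (Suc n)"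
  using \<open>0 \<le> t\<close> \<open>t \<le> T\<close>
proof (induction n arbitrary: t)
  case 0
  show ?case
  proof (rule abs_le_power_fact_if_DERIV[where a=0, unfolded diff_zero])
    fix x :: real assume "0 \<le> x"
    show "((\<lambda>t. picard g (Suc 0) t - picard g 0 t) has_real_derivative
        recip_rhs g x (picard g 0 x) - 0) (at x within {0..})"
      by (intro DERIV_diff picard_DERIV g \<open>0 \<le> x\<close>) simp
  next
    fix x :: real assume "0 < x" "x < t"
    then show "\<bar>recip_rhs g x (picard g 0 x) - 0\<bar> \<le> M * x ^ 0 / fact 0"
      using M[of x] 0 by (simp add: recip_rhs_def)
  qed (use 0 in auto)
next
  case (Suc n)
  show ?case
  proof (rule abs_le_power_fact_if_DERIV[where a=0, unfolded diff_zero])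
    fix x :: real assume "0 \<le> x"
    show "((\<lambda>t. picard g (Suc (Suc n)) t - picard g (Suc n) t) has_real_derivative
        recip_rhs g x (picard g (Suc n) x) - recip_rhs g x (picard g n x)) (at x within {0..})"
      by (intro DERIV_diff picard_DERIV g \<open>0 \<le> x\<close>)
  next
    fix x :: real assume "0 < x" "x < t"
    have "\<bar>recip_rhs g x (picard g (Suc n) x) - recip_rhs g x (picard g n x)\<bar>
        \<le> \<bar>picard g (Suc n) x - picard g n x\<bar>"
      by (rule recip_rhs_lipschitz)
    also have "\<dots> \<le> M * x ^ Suc n / fact (Suc n)"
      using Suc.IH \<open>0 < x\<close> \<open>x < t\<close> Suc.prems by simp
    finally show "\<bar>recip_rhs g x (picard g (Suc n) x) - recip_rhs g x (picard g n x)\<bar>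
        \<le> M * x ^ Suc n / fact (Suc n)" .
  qed (use Suc.prems in auto)
qed

lemma picard_uniform_limit:
  assumes g: "continuous_on {0..} g" and "0 \<le> T"
  shows "uniform_limit {0..T} (picard g) (recip_sol g) sequentially"
proof -
  have "bounded (g ` {0..T})"
    by (intro compact_imp_bounded compact_continuous_image continuous_on_subset[OF g]) auto
  then obtain B where B: "\<forall>\<tau>\<in>{0..T}. \<bar>g \<tau>\<bar> \<le> B"
    unfolding bounded_real by auto
  define M where "M = B + 1"
  have M: "\<bar>g \<tau>\<bar> + 1 \<le> M" if "0 \<le> \<tau>" "\<tau> \<le> T" for \<tau>
    using B that by (simp add: M_def)
  have "0 \<le> M" using M[of 0] \<open>0 \<le> T\<close> by simp
  have "summable (\<lambda>k. M * (T ^ Suc k / fact (Suc k)))"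
    using summable_exp[of T]
    by (subst summable_Suc_iff) (simp add: summable_mult divide_inverse mult.commute)
  then have "uniform_limit {0..T} (\<lambda>n x. \<Sum>k<n. picard g (Suc k) x - picard g k x)
      (\<lambda>x. \<Sum>k. picard g (Suc k) x - picard g k x) sequentially"
  proof (rule Weierstrass_m_test[rotated])
    fix k x assume "x \<in> {0..T}"
    then have "\<bar>picard g (Suc k) x - picard g k x\<bar> \<le> M * x ^ Suc k / fact (Suc k)"
      by (intro picard_step_bound[OF g M]) auto
    also have "\<dots> \<le> M * T ^ Suc k / fact (Suc k)"
      using \<open>x \<in> {0..T}\<close> \<open>0 \<le> M\<close>
      by (intro mult_left_mono divide_right_mono power_mono) auto
    finally show "norm (picard g (Suc k) x - picard g k x) \<le> M * (T ^ Suc k / fact (Suc k))"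
      by simp
  qed
  then have "uniform_limit {0..T} (\<lambda>n x. 1 + (\<Sum>k<n. picard g (Suc k) x - picard g k x))
      (\<lambda>x. 1 + (\<Sum>k. picard g (Suc k) x - picard g k x)) sequentially"
    by (intro uniform_limit_intros)
  moreover have "1 + (\<Sum>k<n. picard g (Suc k) x - picard g k x) = picard g n x" for n x
    by (subst sum_lessThan_telescope) simp
  ultimately have lim: "uniform_limit {0..T} (picard g)
      (\<lambda>x. 1 + (\<Sum>k. picard g (Suc k) x - picard g k x)) sequentially"
    by simp
  show ?thesis
  proof (rule iffD1[OF uniform_limit_cong' lim])
    fix x assume "x \<in> {0..T}"
    then show "1 + (\<Sum>k. picard g (Suc k) x - picard g k x) = recip_sol g x"
      unfolding recip_sol_def by (intro limI[symmetric] tendsto_uniform_limitI[OF lim])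
  qed simp
qed

lemma picard_rhs_uniform_limit:
  assumes g: "continuous_on {0..} g" and "0 \<le> T"
  shows "uniform_limit {0..T} (\<lambda>n y. recip_rhs g y (picard g n y))
    (\<lambda>y. recip_rhs g y (recip_sol g y)) sequentially"
proof (rule uniform_limitI)
  fix e :: real assume "0 < e"
  show "\<forall>\<^sub>F n in sequentially. \<forall>y\<in>{0..T}.
      dist (recip_rhs g y (picard g n y)) (recip_rhs g y (recip_sol g y)) < e"
    using uniform_limitD[OF picard_uniform_limit[OF assms] \<open>0 < e\<close>]
    by eventually_elim (auto simp: dist_real_def intro: le_less_trans[OF recip_rhs_lipschitz])
qed

lemma recip_sol_DERIV_rhs:
  assumes g: "continuous_on {0..} g" and "0 \<le> t"
  shows "(recip_sol g has_real_derivative recip_rhs g t (recip_sol g t)) (at t within {0..})"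
proof -
  define T where "T = t + 1"
  have "0 \<le> T" "t \<in> {0..T}" using \<open>0 \<le> t\<close> by (auto simp: T_def)
  note lim = picard_uniform_limit[OF g \<open>0 \<le> T\<close>]
  have "\<exists>G. \<forall>y\<in>{0..T}. (\<lambda>n. picard g (Suc n) y) \<longlonglongrightarrow> G y \<and>
      (G has_derivative (*) (recip_rhs g y (recip_sol g y))) (at y within {0..T})"
  proof (rule has_derivative_sequence[of "{0..T}" _ _ _ 0 1])
    fix n y assume "y \<in> {0..T}"
    then have "(picard g (Suc n) has_real_derivative recip_rhs g y (picard g n y))
        (at y within {0..T})"
      by (intro DERIV_subset[OF picard_DERIV[OF g]]) auto
    then show "(picard g (Suc n) has_derivative (*) (recip_rhs g y (picard g n y)))
        (at y within {0..T})"
      by (simp add: has_field_derivative_def)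
  next
    fix e :: real assume "0 < e"
    show "\<forall>\<^sub>F n in sequentially. \<forall>y\<in>{0..T}. \<forall>h.
        norm (recip_rhs g y (picard g n y) * h - recip_rhs g y (recip_sol g y) * h) \<le> e * norm h"
      using uniform_limitD[OF picard_rhs_uniform_limit[OF g \<open>0 \<le> T\<close>] \<open>0 < e\<close>]
      by eventually_elim
        (auto simp: dist_real_def left_diff_distrib[symmetric] abs_mult intro!: mult_right_mono)
  next
    show "convex {0..T}" by simp
    show "0 \<in> {0..T}" using \<open>0 \<le> T\<close> by simp
    show "(\<lambda>n. picard g (Suc n) 0) \<longlonglongrightarrow> 1" by simp
  qed
  then obtain G where G: "\<And>y. y \<in> {0..T} \<Longrightarrow> (\<lambda>n. picard g (Suc n) y) \<longlonglongrightarrow> G y"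
    "(G has_derivative (*) (recip_rhs g t (recip_sol g t))) (at t within {0..T})"
    using \<open>t \<in> {0..T}\<close> by blast
  have G_eq: "G y = recip_sol g y" if "y \<in> {0..T}" for y
    using LIMSEQ_unique[OF G(1)[OF that] LIMSEQ_Suc[OF tendsto_uniform_limitI[OF lim that]]] .
  have "(G has_real_derivative recip_rhs g t (recip_sol g t)) (at t within {0..T})"
    using G(2) by (simp add: has_field_derivative_def)
  then have "(recip_sol g has_real_derivative recip_rhs g t (recip_sol g t)) (at t within {0..T})"
    by (rule has_field_derivative_transform_within[where d=1]) (use G_eq \<open>t \<in> {0..T}\<close> in auto)
  then show ?thesis
    using at_within_atLeast_eq_atLeastAtMost[of 0 t T] \<open>0 \<le> t\<close> by (simp add: T_def)
qed

lemma recip_sol_at_0 [simp]: "recip_sol g 0 = 1"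
  by (simp add: recip_sol_def)

lemma recip_sol_ge_one:
  assumes g: "continuous_on {0..} g" and g_nonneg: "\<And>t. 0 \<le> t \<Longrightarrow> 0 \<le> g t" and "0 \<le> t"
  shows "1 \<le> recip_sol g t"
proof -
  have "recip_sol g 0 \<le> recip_sol g t"
    by (rule DERIV_nonneg_imp_increasing_atLeast[OF recip_sol_DERIV_rhs[OF g]])
       (use assms in \<open>auto simp: recip_rhs_def\<close>)
  then show ?thesis by simp
qed

lemma recip_sol_DERIV:
  assumes g: "continuous_on {0..} g" and g_nonneg: "\<And>t. 0 \<le> t \<Longrightarrow> 0 \<le> g t" and "0 \<le> t"
  shows "(recip_sol g has_real_derivative g t + 1 / recip_sol g t) (at t within {0..})"
  using recip_sol_DERIV_rhs[OF g \<open>0 \<le> t\<close>] recip_sol_ge_one[OF assms]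
  by (simp add: recip_rhs_def max_def)

lemma continuous_on_recip_sol:
  "continuous_on {0..} g \<Longrightarrow> continuous_on {0..} (recip_sol g)"
  by (rule DERIV_atLeast_imp_continuous_on[OF recip_sol_DERIV_rhs])

lemma recip_sol_strict_mono:
  assumes g: "continuous_on {0..} g" and g_nonneg: "\<And>t. 0 \<le> t \<Longrightarrow> 0 \<le> g t"
    and "0 \<le> s" "s < t"
  shows "recip_sol g s < recip_sol g t"
proof (rule DERIV_pos_imp_increasing_atLeast[OF recip_sol_DERIV[OF g g_nonneg]])
  fix x assume "s < x"
  then have "1 \<le> recip_sol g x" "0 \<le> g x"
    using recip_sol_ge_one[OF g g_nonneg] g_nonneg \<open>0 \<le> s\<close> by auto
  then show "0 < g x + 1 / recip_sol g x"
    by (simp add: add_nonneg_pos)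
qed (use assms in auto)

text \<open>The coefficient is \<open>K = 1 / (u\<^sub>1 u\<^sub>2)\<close>, since
  \<open>1 / u\<^sub>2 - 1 / u\<^sub>1 = - (u\<^sub>2 - u\<^sub>1) / (u\<^sub>1 u\<^sub>2)\<close>.\<close>
lemma recip_sol_diff_linear_ode:
  assumes g1: "continuous_on {0..} g1" "\<And>t. 0 \<le> t \<Longrightarrow> 0 \<le> g1 t"
    and g2: "continuous_on {0..} g2" "\<And>t. 0 \<le> t \<Longrightarrow> 0 \<le> g2 t"
  obtains K where "continuous_on {0..} K" "\<And>x. 0 \<le> x \<Longrightarrow> 0 < K x"
    "\<And>x. 0 \<le> x \<Longrightarrow> ((\<lambda>x. recip_sol g2 x - recip_sol g1 x) has_real_derivative
       (g2 x - g1 x) - K x * (recip_sol g2 x - recip_sol g1 x)) (at x within {0..})"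
proof
  let ?u1 = "recip_sol g1" and ?u2 = "recip_sol g2"
  have ge_one: "1 \<le> ?u1 x" "1 \<le> ?u2 x" if "0 \<le> x" for x
    using recip_sol_ge_one g1 g2 that by auto
  have "continuous_on {0..} (\<lambda>x. ?u1 x * ?u2 x)"
    by (intro continuous_on_mult continuous_on_recip_sol g1 g2)
  then show "continuous_on {0..} (\<lambda>x. 1 / (?u1 x * ?u2 x))"
    by (rule continuous_on_divide[OF continuous_on_const]) (use ge_one in force)
  show "0 < 1 / (?u1 x * ?u2 x)" if "0 \<le> x" for x
    using ge_one[OF that] by simp
  fix x :: real assume "0 \<le> x"
  have "((\<lambda>x. ?u2 x - ?u1 x) has_real_derivative
      (g2 x + 1 / ?u2 x) - (g1 x + 1 / ?u1 x)) (at x within {0..})"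
    by (intro DERIV_diff recip_sol_DERIV g1 g2 \<open>0 \<le> x\<close>)
  moreover have "(g2 x + 1 / ?u2 x) - (g1 x + 1 / ?u1 x)
      = (g2 x - g1 x) - 1 / (?u1 x * ?u2 x) * (?u2 x - ?u1 x)"
    using ge_one[OF \<open>0 \<le> x\<close>] by (simp add: field_simps)
  ultimately show "((\<lambda>x. ?u2 x - ?u1 x) has_real_derivative
      (g2 x - g1 x) - 1 / (?u1 x * ?u2 x) * (?u2 x - ?u1 x)) (at x within {0..})"
    by simp
qed

lemma recip_sol_strict_mono_forcing:
  assumes g1: "continuous_on {0..} g1" "\<And>t. 0 \<le> t \<Longrightarrow> 0 \<le> g1 t"
    and g2: "continuous_on {0..} g2" "\<And>t. 0 \<le> t \<Longrightarrow> 0 \<le> g2 t"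
    and less: "\<And>x. 0 < x \<Longrightarrow> g1 x < g2 x" and "0 < t"
  shows "recip_sol g1 t < recip_sol g2 t"
proof -
  obtain K where K: "continuous_on {0..} K" and "\<And>x. 0 \<le> x \<Longrightarrow> 0 < K x"
    and d: "\<And>x. 0 \<le> x \<Longrightarrow> ((\<lambda>x. recip_sol g2 x - recip_sol g1 x) has_real_derivative
       (g2 x - g1 x) - K x * (recip_sol g2 x - recip_sol g1 x)) (at x within {0..})"
    using recip_sol_diff_linear_ode[OF g1 g2] by blast
  have "0 < recip_sol g2 t - recip_sol g1 t"
    by (rule linear_ode_solution_pos[OF K d]) (use less \<open>0 < t\<close> in auto)
  then show ?thesis by simp
qed

lemma recip_sol_diff_le:
  assumes g1: "continuous_on {0..} g1" "\<And>t. 0 \<le> t \<Longrightarrow> 0 \<le> g1 t"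
    and g2: "continuous_on {0..} g2" "\<And>t. 0 \<le> t \<Longrightarrow> 0 \<le> g2 t"
    and le: "\<And>x. 0 \<le> x \<Longrightarrow> g2 x - g1 x \<le> c" and "0 \<le> c" "0 \<le> t"
  shows "recip_sol g2 t - recip_sol g1 t \<le> c * t"
proof -
  let ?d = "\<lambda>x. recip_sol g2 x - recip_sol g1 x"
  obtain K where K: "continuous_on {0..} K" and K_pos: "\<And>x. 0 \<le> x \<Longrightarrow> 0 < K x"
    and d: "\<And>x. 0 \<le> x \<Longrightarrow> (?d has_real_derivative (g2 x - g1 x) - K x * ?d x) (at x within {0..})"
    using recip_sol_diff_linear_ode[OF g1 g2] by blast
  have "0 \<le> c * t - ?d t"
  proof (rule linear_ode_solution_nonneg[OF K, where d="\<lambda>x. c * x - ?d x"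
        and h="\<lambda>x. c - (g2 x - g1 x) + K x * c * x"])
    fix x :: real assume "0 \<le> x"
    have "((\<lambda>x. c * x - ?d x) has_real_derivative c * 1 - ((g2 x - g1 x) - K x * ?d x))
        (at x within {0..})"
      by (intro DERIV_diff DERIV_cmult DERIV_ident d \<open>0 \<le> x\<close>)
    then show "((\<lambda>x. c * x - ?d x) has_real_derivative
        (c - (g2 x - g1 x) + K x * c * x) - K x * (c * x - ?d x)) (at x within {0..})"
      by (simp add: algebra_simps)
  next
    fix x :: real assume "0 < x"
    then show "0 \<le> c - (g2 x - g1 x) + K x * c * x"
      using le[of x] K_pos[of x] \<open>0 \<le> c\<close> by simp
  qed (use \<open>0 \<le> t\<close> in auto)
  then show ?thesis by simp
qed

lemma recip_sol_abs_diff_le: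
  assumes g1: "continuous_on {0..} g1" "\<And>t. 0 \<le> t \<Longrightarrow> 0 \<le> g1 t"
    and g2: "continuous_on {0..} g2" "\<And>t. 0 \<le> t \<Longrightarrow> 0 \<le> g2 t"
    and le: "\<And>x. 0 \<le> x \<Longrightarrow> \<bar>g2 x - g1 x\<bar> \<le> c" and "0 \<le> t"
  shows "\<bar>recip_sol g2 t - recip_sol g1 t\<bar> \<le> c * t"
proof -
  have "0 \<le> c" using le[of 0] by simp
  have bounds: "g2 x - g1 x \<le> c" "g1 x - g2 x \<le> c" if "0 \<le> x" for x
    using le[OF that] by auto
  have "recip_sol g2 t - recip_sol g1 t \<le> c * t"
    by (rule recip_sol_diff_le[OF g1 g2 bounds(1) \<open>0 \<le> c\<close> \<open>0 \<le> t\<close>])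
  moreover have "recip_sol g1 t - recip_sol g2 t \<le> c * t"
    by (rule recip_sol_diff_le[OF g2 g1 bounds(2) \<open>0 \<le> c\<close> \<open>0 \<le> t\<close>])
  ultimately show ?thesis by simp
qed

lemma abs_sqrt_add_diff_le:
  fixes a w1 w2 :: real
  assumes "0 \<le> a" "0 \<le> w1" "0 \<le> w2"
  shows "\<bar>sqrt (a + w2) - sqrt (a + w1)\<bar> \<le> sqrt \<bar>w2 - w1\<bar>"
proof -
  have *: "\<bar>sqrt (a + y) - sqrt (a + x)\<bar> \<le> sqrt (y - x)" if "0 \<le> x" "x \<le> y" for x y
  proof -
    have "sqrt (a + y) \<le> sqrt (a + x) + sqrt (y - x)"
      using sqrt_add_le_add_sqrt[of "a + x" "y - x"] that assms by simp
    then show ?thesis using that by simp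
  qed
  show ?thesis
    using *[of w1 w2] *[of w2 w1] assms by (cases "w1 \<le> w2") (auto simp: abs_minus_commute)
qed

lemma sqrt_quadratic_forcing:
  fixes A w :: real
  assumes "0 \<le> w"
  shows "continuous_on {0..} (\<lambda>s. sqrt (A\<^sup>2 * s\<^sup>2 + w))" "\<And>s. 0 \<le> s \<Longrightarrow> 0 \<le> sqrt (A\<^sup>2 * s\<^sup>2 + w)"
  using assms by (auto intro!: continuous_intros)

lemma recip_sol_sqrt_quadratic_lower_bound:
  fixes A :: real
  assumes "A \<noteq> 0" "0 \<le> w" "0 < t"
  shows "1 + t * sqrt (A\<^sup>2 * t\<^sup>2 + w) / 2 < recip_sol (\<lambda>s. sqrt (A\<^sup>2 * s\<^sup>2 + w)) t"
proof -
  let ?u = "recip_sol (\<lambda>s. sqrt (A\<^sup>2 * s\<^sup>2 + w))"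
  note forcing = sqrt_quadratic_forcing[OF \<open>0 \<le> w\<close>, where A=A]
  define f where "f x = ?u x - 1 - x * sqrt (A\<^sup>2 * x\<^sup>2 + w) / 2" for x
  have "f 0 < f t"
  proof (rule DERIV_pos_imp_increasing_open[OF \<open>0 < t\<close>])
    have "continuous_on {0..t} ?u"
      by (rule continuous_on_subset[OF continuous_on_recip_sol[OF forcing(1)]]) auto
    then show "continuous_on {0..t} f"
      unfolding f_def by (intro continuous_intros) auto
    fix x :: real assume "0 < x" "x < t"
    define s where "s = sqrt (A\<^sup>2 * x\<^sup>2 + w)"
    have "0 < A\<^sup>2 * x\<^sup>2 + w" using assms \<open>0 < x\<close> by (simp add: add_pos_nonneg)
    then have "0 < s" "s\<^sup>2 = A\<^sup>2 * x\<^sup>2 + w" by (simp_all add: s_def)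
    have "((\<lambda>x. x * sqrt (A\<^sup>2 * x\<^sup>2 + w)) has_real_derivative
        1 * s + x * (inverse s / 2 * (A\<^sup>2 * (2 * x)))) (at x)"
      using \<open>0 < A\<^sup>2 * x\<^sup>2 + w\<close> unfolding s_def by (auto intro!: derivative_eq_intros)
    moreover have "(?u has_real_derivative s + 1 / ?u x) (at x)"
      using DERIV_within_atLeast_imp_at[OF \<open>0 < x\<close> recip_sol_DERIV[OF forcing]] \<open>0 < x\<close>
      by (simp add: s_def)
    ultimately have "(f has_real_derivative
        (s + 1 / ?u x) - 0 - (1 * s + x * (inverse s / 2 * (A\<^sup>2 * (2 * x)))) / 2) (at x)"
      unfolding f_def by (intro DERIV_diff DERIV_cdivide DERIV_const)
    also have "(s + 1 / ?u x) - 0 - (1 * s + x * (inverse s / 2 * (A\<^sup>2 * (2 * x)))) / 2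
        = w / (2 * s) + 1 / ?u x"
      using \<open>0 < s\<close> \<open>s\<^sup>2 = A\<^sup>2 * x\<^sup>2 + w\<close> by (simp add: field_simps power2_eq_square)
    finally have "(f has_real_derivative w / (2 * s) + 1 / ?u x) (at x)" .
    moreover have "0 < w / (2 * s) + 1 / ?u x"
      using \<open>0 < s\<close> \<open>0 \<le> w\<close> recip_sol_ge_one[OF forcing, of x] \<open>0 < x\<close>
      by (simp add: add_nonneg_pos)
    ultimately show "\<exists>y. (f has_real_derivative y) (at x) \<and> 0 < y" by blast
  qed
  then show ?thesis by (simp add: f_def)
qed

definition ivp_solution :: "real \<Rightarrow> real \<Rightarrow> real \<Rightarrow> real" where
  "ivp_solution A w t = 1 / recip_sol (\<lambda>s. sqrt (A\<^sup>2 * s\<^sup>2 + w)) t"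

lemma ivp_sol_ivp_solution:
  assumes "0 \<le> w"
  shows "ivp_sol A w (ivp_solution A w)"
proof -
  let ?u = "recip_sol (\<lambda>s. sqrt (A\<^sup>2 * s\<^sup>2 + w))"
  note forcing = sqrt_quadratic_forcing[OF assms]
  have ge_one: "1 \<le> ?u t" if "0 \<le> t" for t
    using recip_sol_ge_one[OF forcing that] .
  have deriv: "((\<lambda>t. 1 / ?u t) has_real_derivative
      - (1 / ?u t)\<^sup>2 * (sqrt (A\<^sup>2 * t\<^sup>2 + w) + 1 / ?u t)) (at t within {0..})" if "0 \<le> t" for t
  proof -
    have "((\<lambda>t. inverse (?u t)) has_real_derivative
        - ((sqrt (A\<^sup>2 * t\<^sup>2 + w) + 1 / ?u t) * inverse (?u t ^ Suc (Suc 0)))) (at t within {0..})"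
      by (rule DERIV_inverse_fun[OF recip_sol_DERIV[OF forcing that]]) (use ge_one[OF that] in auto)
    then show ?thesis
      by (simp add: inverse_eq_divide power2_eq_square)
  qed
  have "continuous_on {0..} (\<lambda>t. - (1 / ?u t)\<^sup>2 * (sqrt (A\<^sup>2 * t\<^sup>2 + w) + 1 / ?u t))"
    using ge_one by (intro continuous_intros continuous_on_recip_sol forcing(1)) force+
  then show ?thesis
    unfolding ivp_sol_def ivp_solution_def using deriv by auto
qed

lemma ivp_sol_DERIV:
  assumes "ivp_sol A w v" "0 \<le> t"
  shows "(v has_real_derivative - (v t)\<^sup>2 * (sqrt (A\<^sup>2 * t\<^sup>2 + w) + v t)) (at t within {0..})"
  using assms unfolding ivp_sol_def by metis

lemma ivp_sol_unique:
  assumes v1: "ivp_sol A w v1" and v2: "ivp_sol A w v2" and "0 \<le> t"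
  shows "v1 t = v2 t"
proof -
  have "0 \<le> v t - v' t" if v: "ivp_sol A w v" and v': "ivp_sol A w v'" for v v'
  proof -
    let ?s = "\<lambda>x. sqrt (A\<^sup>2 * x\<^sup>2 + w)"
    define K where "K x = (v x + v' x) * ?s x + (v x)\<^sup>2 + v x * v' x + (v' x)\<^sup>2" for x
    have "continuous_on {0..} K"
      unfolding K_def
      using DERIV_atLeast_imp_continuous_on[OF ivp_sol_DERIV[OF v]]
        DERIV_atLeast_imp_continuous_on[OF ivp_sol_DERIV[OF v']]
      by (intro continuous_intros)
    moreover have "((\<lambda>x. v x - v' x) has_real_derivative 0 - K x * (v x - v' x))
        (at x within {0..})" if "0 \<le> x" for x
    proof -
      have "((\<lambda>x. v x - v' x) has_real_derivative
          - (v x)\<^sup>2 * (?s x + v x) - - (v' x)\<^sup>2 * (?s x + v' x)) (at x within {0..})"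
        by (intro DERIV_diff ivp_sol_DERIV v v' that)
      moreover have "- (v x)\<^sup>2 * (?s x + v x) - - (v' x)\<^sup>2 * (?s x + v' x) = 0 - K x * (v x - v' x)"
        unfolding K_def by (simp add: algebra_simps power2_eq_square)
      ultimately show ?thesis by simp
    qed
    ultimately show ?thesis
      by (rule linear_ode_solution_nonneg) (use v v' \<open>0 \<le> t\<close> in \<open>auto simp: ivp_sol_def\<close>)
  qed
  from this[OF v1 v2] this[OF v2 v1] show ?thesis by simp
qed

lemma ivp_solution_pos_le_one:
  assumes "0 \<le> w" "0 \<le> t"
  shows "0 < ivp_solution A w t \<and> ivp_solution A w t \<le> 1"
proof -
  have "1 \<le> recip_sol (\<lambda>s. sqrt (A\<^sup>2 * s\<^sup>2 + w)) t"
    by (rule recip_sol_ge_one[OF sqrt_quadratic_forcing[OF assms(1)] assms(2)])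
  then show ?thesis by (simp add: ivp_solution_def)
qed

lemma ivp_solution_strict_antimono:
  assumes "0 \<le> w" "0 \<le> s" "s < t"
  shows "ivp_solution A w t < ivp_solution A w s"
proof -
  note forcing = sqrt_quadratic_forcing[OF assms(1), where A=A]
  have "recip_sol (\<lambda>s. sqrt (A\<^sup>2 * s\<^sup>2 + w)) s < recip_sol (\<lambda>s. sqrt (A\<^sup>2 * s\<^sup>2 + w)) t"
    by (rule recip_sol_strict_mono[OF forcing assms(2,3)])
  moreover have "1 \<le> recip_sol (\<lambda>s. sqrt (A\<^sup>2 * s\<^sup>2 + w)) s"
    by (rule recip_sol_ge_one[OF forcing assms(2)])
  ultimately show ?thesis
    unfolding ivp_solution_def by (intro frac_less2[OF zero_less_one order_refl]) auto
qed

lemma ivp_solution_strict_antimono_param: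
  assumes "0 \<le> w1" "w1 < w2" "0 < t"
  shows "ivp_solution A w2 t < ivp_solution A w1 t"
proof -
  have "recip_sol (\<lambda>s. sqrt (A\<^sup>2 * s\<^sup>2 + w1)) t < recip_sol (\<lambda>s. sqrt (A\<^sup>2 * s\<^sup>2 + w2)) t"
    by (rule recip_sol_strict_mono_forcing[OF sqrt_quadratic_forcing sqrt_quadratic_forcing])
       (use assms in auto)
  then show ?thesis
    using recip_sol_ge_one[OF sqrt_quadratic_forcing[OF assms(1), where A=A], of t] assms
    unfolding ivp_solution_def by (intro frac_less2[OF zero_less_one order_refl]) auto
qed

lemma ivp_solution_less:
  assumes "A \<noteq> 0" "0 \<le> w" "0 < t"
  shows "ivp_solution A w t < 2 / (2 + t * sqrt (A\<^sup>2 * t\<^sup>2 + w))"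
proof -
  have "0 < 1 + t * sqrt (A\<^sup>2 * t\<^sup>2 + w) / 2" using assms by (simp add: add_pos_nonneg)
  then have "1 / recip_sol (\<lambda>s. sqrt (A\<^sup>2 * s\<^sup>2 + w)) t < 1 / (1 + t * sqrt (A\<^sup>2 * t\<^sup>2 + w) / 2)"
    by (rule frac_less2[OF zero_less_one order_refl _
          recip_sol_sqrt_quadratic_lower_bound[OF assms]])
  also have "\<dots> = 2 / (2 + t * sqrt (A\<^sup>2 * t\<^sup>2 + w))"
    using \<open>0 < 1 + t * sqrt (A\<^sup>2 * t\<^sup>2 + w) / 2\<close> by (simp add: field_simps)
  finally show ?thesis by (simp add: ivp_solution_def)
qed

lemma ivp_solution_le_decay:
  assumes "0 < A" "0 \<le> w" "0 \<le> t"
  shows "ivp_solution A w t \<le> 2 / (2 + A * t\<^sup>2)"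
proof (cases "t = 0")
  case False
  then have "0 < t" using assms by simp
  have "(A * t)\<^sup>2 \<le> A\<^sup>2 * t\<^sup>2 + w"
    using assms by (simp add: power_mult_distrib)
  then have "A * t \<le> sqrt (A\<^sup>2 * t\<^sup>2 + w)"
    by (rule real_le_rsqrt)
  then have "t * (A * t) \<le> t * sqrt (A\<^sup>2 * t\<^sup>2 + w)"
    using \<open>0 \<le> t\<close> by (rule mult_left_mono)
  then have "A * t\<^sup>2 \<le> t * sqrt (A\<^sup>2 * t\<^sup>2 + w)"
    by (simp add: power2_eq_square algebra_simps)
  then have "2 / (2 + t * sqrt (A\<^sup>2 * t\<^sup>2 + w)) \<le> 2 / (2 + A * t\<^sup>2)"
    using assms by (intro divide_left_mono) (simp_all add: add_pos_nonneg)
  then show ?thesis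
    using ivp_solution_less[OF _ \<open>0 \<le> w\<close> \<open>0 < t\<close>, of A] assms by simp
qed (simp add: ivp_solution_def)

lemma tendsto_ivp_solution:
  assumes "0 < A" "0 \<le> w"
  shows "(ivp_solution A w \<longlongrightarrow> 0) at_top"
proof (rule tendsto_sandwich[OF _ _ tendsto_const])
  show "((\<lambda>t. 2 / (2 + A * t\<^sup>2)) \<longlongrightarrow> 0) at_top"
    using \<open>0 < A\<close> by real_asymp
  show "\<forall>\<^sub>F t in at_top. 0 \<le> ivp_solution A w t"
    using eventually_ge_at_top[of 0]
    by eventually_elim (use ivp_solution_pos_le_one[OF \<open>0 \<le> w\<close>] in \<open>auto intro: less_imp_le\<close>)
  show "\<forall>\<^sub>F t in at_top. ivp_solution A w t \<le> 2 / (2 + A * t\<^sup>2)"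
    using eventually_ge_at_top[of 0] by eventually_elim (rule ivp_solution_le_decay[OF assms])
qed

lemma ivp_solution_abs_diff_le:
  assumes "0 \<le> w" "0 \<le> w0" "0 \<le> t"
  shows "\<bar>ivp_solution A w t - ivp_solution A w0 t\<bar> \<le> sqrt \<bar>w - w0\<bar> * t"
proof -
  let ?u = "\<lambda>w. recip_sol (\<lambda>s. sqrt (A\<^sup>2 * s\<^sup>2 + w))"
  note forcing_w = sqrt_quadratic_forcing[OF \<open>0 \<le> w\<close>, where A=A]
    and forcing_w0 = sqrt_quadratic_forcing[OF \<open>0 \<le> w0\<close>, where A=A]
  have "\<bar>ivp_solution A w t - ivp_solution A w0 t\<bar> \<le> \<bar>?u w t - ?u w0 t\<bar>"
    unfolding ivp_solution_def
    by (rule abs_one_div_diff_le[OF recip_sol_ge_one[OF forcing_w \<open>0 \<le> t\<close>]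
          recip_sol_ge_one[OF forcing_w0 \<open>0 \<le> t\<close>]])
  also have "\<dots> \<le> sqrt \<bar>w - w0\<bar> * t"
    by (rule recip_sol_abs_diff_le[OF forcing_w0 forcing_w _ \<open>0 \<le> t\<close>])
       (use abs_sqrt_add_diff_le assms in auto)
  finally show ?thesis .
qed

lemma ivp_solution_uniformly_continuous_param:
  assumes "0 < A" "0 \<le> w0" "0 < e"
  obtains d where "0 < d"
    "\<And>w t. 0 \<le> w \<Longrightarrow> \<bar>w - w0\<bar> < d \<Longrightarrow> 0 \<le> t \<Longrightarrow>
       \<bar>ivp_solution A w t - ivp_solution A w0 t\<bar> \<le> e"
proof -
  have "((\<lambda>t. 2 / (2 + A * t\<^sup>2)) \<longlongrightarrow> 0) at_top"
    using \<open>0 < A\<close> by real_asymp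
  from order_tendstoD(2)[OF this \<open>0 < e\<close>]
  obtain T0 where T0: "\<And>t. T0 \<le> t \<Longrightarrow> 2 / (2 + A * t\<^sup>2) < e"
    by (auto simp: eventually_at_top_linorder)
  define T where "T = max 1 T0"
  have "1 \<le> T" by (simp add: T_def)
  show ?thesis
  proof
    show "0 < (e / T)\<^sup>2" using \<open>0 < e\<close> \<open>1 \<le> T\<close> by simp
    fix w t :: real assume w: "0 \<le> w" "\<bar>w - w0\<bar> < (e / T)\<^sup>2" and "0 \<le> t"
    show "\<bar>ivp_solution A w t - ivp_solution A w0 t\<bar> \<le> e"
    proof (cases "t \<le> T")
      case True
      have "sqrt \<bar>w - w0\<bar> \<le> sqrt ((e / T)\<^sup>2)"
        using w(2) by (rule real_sqrt_le_mono[OF less_imp_le])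
      then have sqrt_le: "sqrt \<bar>w - w0\<bar> \<le> e / T"
        using \<open>0 < e\<close> \<open>1 \<le> T\<close> by simp
      have "\<bar>ivp_solution A w t - ivp_solution A w0 t\<bar> \<le> sqrt \<bar>w - w0\<bar> * t"
        by (rule ivp_solution_abs_diff_le[OF w(1) \<open>0 \<le> w0\<close> \<open>0 \<le> t\<close>])
      also have "\<dots> \<le> e / T * T"
        using \<open>0 < e\<close> \<open>1 \<le> T\<close> \<open>0 \<le> t\<close> by (intro mult_mono sqrt_le True) simp_all
      finally show ?thesis using \<open>1 \<le> T\<close> by simp
    next
      case False
      then have "2 / (2 + A * t\<^sup>2) < e" by (intro T0) (simp add: T_def)
      moreover have "0 < ivp_solution A w t" "0 < ivp_solution A w0 t"
        using ivp_solution_pos_le_one w(1) \<open>0 \<le> w0\<close> \<open>0 \<le> t\<close> by blast+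
      moreover have "ivp_solution A w t \<le> 2 / (2 + A * t\<^sup>2)"
        "ivp_solution A w0 t \<le> 2 / (2 + A * t\<^sup>2)"
        using ivp_solution_le_decay \<open>0 < A\<close> w(1) \<open>0 \<le> w0\<close> \<open>0 \<le> t\<close> by blast+
      ultimately show ?thesis by (simp add: abs_le_iff)
    qed
  qed
qed

theorem lemma4p1:
  fixes A :: real
  assumes "A > 0"
  shows "(\<forall>w\<ge>0. (\<exists>v. ivp_sol A w v) \<and>
            (\<forall>v1 v2. ivp_sol A w v1 \<longrightarrow> ivp_sol A w v2 \<longrightarrow> (\<forall>t\<ge>0. v1 t = v2 t)))
       \<and> (\<forall>V :: real \<Rightarrow> real \<Rightarrow> real. (\<forall>w\<ge>0. ivp_sol A w (V w)) \<longrightarrow>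
            (\<forall>w\<ge>0. \<forall>t\<ge>0. 0 < V w t \<and> V w t \<le> 1)
          \<and> (\<forall>w\<ge>0. \<forall>s t. 0 \<le> s \<longrightarrow> s < t \<longrightarrow> V w t < V w s)
          \<and> (\<forall>t>0. \<forall>w1 w2. 0 \<le> w1 \<longrightarrow> w1 < w2 \<longrightarrow> V w2 t < V w1 t)
          \<and> (\<forall>t>0. \<forall>w\<ge>0. V w t < 2 / (2 + t * sqrt (A\<^sup>2 * t\<^sup>2 + w)))
          \<and> (\<forall>w\<ge>0. (V w \<longlongrightarrow> 0) at_top)
          \<and> (\<forall>w0\<ge>0. \<forall>e>0. \<exists>d>0. \<forall>w\<ge>0. \<bar>w - w0\<bar> < d \<longrightarrow>
                 (\<forall>t>0. \<bar>V w t - V w0 t\<bar> \<le> e)))"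
proof (intro conjI allI impI)
  fix w :: real assume "0 \<le> w"
  then show "\<exists>v. ivp_sol A w v" using ivp_sol_ivp_solution by blast
  show "v1 t = v2 t" if "ivp_sol A w v1" "ivp_sol A w v2" "0 \<le> t" for v1 v2 t
    using ivp_sol_unique that by blast
next
  fix V :: "real \<Rightarrow> real \<Rightarrow> real" assume "\<forall>w\<ge>0. ivp_sol A w (V w)"
  then have V: "V w t = ivp_solution A w t" if "0 \<le> w" "0 \<le> t" for w t
    using ivp_sol_unique ivp_sol_ivp_solution that by blast
  show "0 < V w t" "V w t \<le> 1" if "0 \<le> w" "0 \<le> t" for w t
    using ivp_solution_pos_le_one[OF that] by (simp_all add: V that)
  show "V w t < V w s" if "0 \<le> w" "0 \<le> s" "s < t" for w s t
    using ivp_solution_strict_antimono[OF that] that by (simp add: V)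
  show "V w2 t < V w1 t" if "0 < t" "0 \<le> w1" "w1 < w2" for t w1 w2
    using ivp_solution_strict_antimono_param[OF that(2,3,1)] that by (simp add: V)
  show "V w t < 2 / (2 + t * sqrt (A\<^sup>2 * t\<^sup>2 + w))" if "0 < t" "0 \<le> w" for t w
    using ivp_solution_less[OF _ that(2,1), of A] assms that by (simp add: V)
  show "(V w \<longlongrightarrow> 0) at_top" if "0 \<le> w" for w
  proof (rule Lim_transform_eventually[OF tendsto_ivp_solution[OF assms that]])
    show "\<forall>\<^sub>F t in at_top. ivp_solution A w t = V w t"
      using eventually_ge_at_top[of 0] by eventually_elim (simp add: V that)
  qed
  show "\<exists>d>0. \<forall>w\<ge>0. \<bar>w - w0\<bar> < d \<longrightarrow> (\<forall>t>0. \<bar>V w t - V w0 t\<bar> \<le> e)"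
    if "0 \<le> w0" "0 < e" for w0 e
    using ivp_solution_uniformly_continuous_param[OF assms that] that
    by (metis V less_imp_le)
qed

end
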